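(* Let $T$ be a compactum, $k\in\mathbb N$, $\mathbf a\in T\sqcup\mathrm{Ent}\,T$, $\mathbf c\in\mathrm{Ent}\,T$ and $p\in T$, and suppose $\mathbf a-\mathbf c-p\ (k)$. Suppose $p$ is an accumulation point of an infinite set $B\subset\mathrm{Ent}\,T$. Then there exists $\mathbf b\in B$ such that $\mathbf a-\mathbf c-\mathbf b\ (k)$.
   Context: Let $T$ be a compact Hausdorff space, $S^2T$ the space of unordered pairs of points of $T$ (diagonal allowed), $\Delta^2T$ the diagonal. An entourage is a neighborhood of $\Delta^2T$ in $S^2T$; $\mathrm{Ent}\,T$ is the set of entourages. For an entourage $\mathbf e$, $\Delta_{\mathbf e}$ is the graph distance on $T$ for the graph with vertex set $T$ and edges the pairs $\{x,y\}\in\mathbf e$ ($\infty$ between components); for $a,b\subset T$, $\Delta_{\mathbf e}(a,b)=\inf\{\Delta_{\mathbf e}(x,y):x\in a,y\in b\}$. A set is $\mathbf e$-small if its $\Delta_{\mathbf e}$-diameter is $\le1$. Entourages $\mathbf a,\mathbf b$ are unlinked ($\mathbf a\bowtie\mathbf b$) if $T=a\cup b$ with $a$ $\mathbf a$-small, $b$ $\mathbf b$-small; linked otherwise. Standing conventions: all entourages considered are linked with themselves and have $\Delta_{\mathbf a}$-diameter of $T$ greater than $4$. For $\mathbf a\bowtie\mathbf b$ the shadow is $\mathrm{sh}_{\mathbf a}\mathbf b=\bigcap\{a: a\text{ is }\mathbf a\text{-small and }T\setminus a\text{ is }\mathbf b\text{-small}\}$. Betweenness for $k\in\mathbb N$: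 for entourages, $\mathbf a-\mathbf b-\mathbf c\ (k)$ means $\mathbf a\bowtie\mathbf b\bowtie\mathbf c$ and $\Delta_{\mathbf b}(\mathrm{sh}_{\mathbf b}\mathbf a,\mathrm{sh}_{\mathbf b}\mathbf c)>k$; for $p\in T$, $\mathbf a-\mathbf b-p\ (k)$ (equivalently $p-\mathbf b-\mathbf a\ (k)$) means $\mathbf a\bowtie\mathbf b$ and $\Delta_{\mathbf b}(\mathrm{sh}_{\mathbf b}\mathbf a,b)>k$ for every $\mathbf b$-small neighborhood $b$ of $p$; for distinct $p,q\in T$, $q-\mathbf b-p\ (k)$ means $\Delta_{\mathbf b}(b_1,b_2)>k$ for all $\mathbf b$-small neighborhoods $b_1$ of $p$ and $b_2$ of $q$. A point $p\in T$ is an accumulation point of $B\subset\mathrm{Ent}\,T$ if for every open $o\ni p$ in $T$ there are infinitely many $\mathbf b\in B$ for which $T\setminus o$ is $\mathbf b$-small (this is accumulation in the topology on $T\sqcup\mathrm{Ent}\,T$ whose neighborhoods of $t\in T$ contain sets $o\cup\{\mathbf e: T\setminus o\ \mathbf e\text{-small}\}$). *)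

theory Defs
  imports "HOL-Analysis.Analysis" "HOL-Library.Extended_Nat"
begin

text \<open>The compactum T is the whole of a type 'a of class t2_space with compact UNIV.
An unordered pair {x,y} is represented by the two ordered pairs (x,y),(y,x); a subset of
S^2T is thus a symmetric relation on 'a. A set is a neighbourhood of the diagonal in S^2T
(quotient topology of T x T) iff its symmetric preimage contains an open set of T x T
containing the diagonal.\<close>

definition entourage :: "('a::topological_space \<times> 'a) set \<Rightarrow> bool" where
  "entourage E \<longleftrightarrow> sym E \<and> (\<exists>U. open U \<and> Id \<subseteq> U \<and> U \<subseteq> E)"

text \<open>Graph distance: least number of edges of a path, \<infinity> between components.\<close>
definition edist :: "('a \<times> 'a) set \<Rightarrow> 'a \<Rightarrow> 'a \<Rightarrow> enat" where
  "edist E x y = Inf {enat n | n. (x, y) \<in> E ^^ n}"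

definition setdist :: "('a \<times> 'a) set \<Rightarrow> 'a set \<Rightarrow> 'a set \<Rightarrow> enat" where
  "setdist E A B = Inf {edist E x y | x y. x \<in> A \<and> y \<in> B}"

definition small :: "('a \<times> 'a) set \<Rightarrow> 'a set \<Rightarrow> bool" where
  "small E A \<longleftrightarrow> (\<forall>x\<in>A. \<forall>y\<in>A. edist E x y \<le> 1)"

definition unlinked :: "('a \<times> 'a) set \<Rightarrow> ('a \<times> 'a) set \<Rightarrow> bool" where
  "unlinked E F \<longleftrightarrow> (\<exists>A B. UNIV = A \<union> B \<and> small E A \<and> small F B)"

text \<open>Standing conventions: linked with itself, and diameter of T greater than 4.\<close>
definition good_ent :: "('a::topological_space \<times> 'a) set \<Rightarrow> bool" where
  "good_ent E \<longleftrightarrow> entourage E \<and> \<not> unlinked E E \<and> (\<exists>x y. edist E x y > 4)"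

definition shadow :: "('a \<times> 'a) set \<Rightarrow> ('a \<times> 'a) set \<Rightarrow> 'a set" where
  "shadow A B = \<Inter>{a. small A a \<and> small B (- a)}"

definition nbhd :: "'a::topological_space set \<Rightarrow> 'a \<Rightarrow> bool" where
  "nbhd S p \<longleftrightarrow> (\<exists>U. open U \<and> p \<in> U \<and> U \<subseteq> S)"

definition betw_eee :: "('a \<times> 'a) set \<Rightarrow> ('a \<times> 'a) set \<Rightarrow> ('a \<times> 'a) set \<Rightarrow> nat \<Rightarrow> bool" where
  "betw_eee A B C k \<longleftrightarrow> unlinked A B \<and> unlinked B C \<and>
      setdist B (shadow B A) (shadow B C) > enat k"

text \<open>a - b - p (k) for entourages a, b and a point p (equivalently p - b - a (k)).\<close>
definition betw_eep :: "('a::topological_space \<times> 'a) set \<Rightarrow> ('a \<times> 'a) set \<Rightarrow> 'a \<Rightarrow> nat \<Rightarrow> bool" where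
  "betw_eep A B p k \<longleftrightarrow> unlinked A B \<and>
      (\<forall>b. small B b \<and> nbhd b p \<longrightarrow> setdist B (shadow B A) b > enat k)"

definition betw_pep :: "'a::topological_space \<Rightarrow> ('a \<times> 'a) set \<Rightarrow> 'a \<Rightarrow> nat \<Rightarrow> bool" where
  "betw_pep q B p k \<longleftrightarrow> p \<noteq> q \<and>
      (\<forall>b1 b2. small B b1 \<and> nbhd b1 p \<and> small B b2 \<and> nbhd b2 q \<longrightarrow> setdist B b1 b2 > enat k)"

text \<open>Elements of T \<squnion> Ent T: Inl point, Inr entourage.\<close>
fun betw_xep :: "'a + ('a \<times> 'a) set \<Rightarrow> ('a \<times> 'a) set \<Rightarrow> 'a::topological_space \<Rightarrow> nat \<Rightarrow> bool" where
  "betw_xep (Inl q) C p k = betw_pep q C p k"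
| "betw_xep (Inr A) C p k = betw_eep A C p k"

fun betw_xee :: "'a + ('a \<times> 'a) set \<Rightarrow> ('a \<times> 'a) set \<Rightarrow> ('a::topological_space \<times> 'a) set \<Rightarrow> nat \<Rightarrow> bool" where
  "betw_xee (Inl q) C B k = betw_eep B C q k"
| "betw_xee (Inr A) C B k = betw_eee A C B k"

fun good_elem :: "'a + ('a::topological_space \<times> 'a) set \<Rightarrow> bool" where
  "good_elem (Inl q) = True"
| "good_elem (Inr A) = good_ent A"

definition accumulation :: "'a::topological_space \<Rightarrow> ('a \<times> 'a) set set \<Rightarrow> bool" where
  "accumulation p B \<longleftrightarrow> (\<forall>U. open U \<and> p \<in> U \<longrightarrow> infinite {b \<in> B. small b (- U)})"

end

theory Submission
  imports Defs
begin

(* Since c is an entourage, p has an open neighbourhood V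
   that is c-small.  Because p accumulates B, some b in B makes the complement of V
   b-small.  Then V witnesses that c and b are unlinked, and V is one of the sets
   whose intersection is the shadow of b with respect to c, so this shadow lies
   inside V.  Shrinking a set can only increase the c-distance to it; hence the
   hypothesis a - c - p (k), evaluated at the c-small neighbourhood V of p, gives
   a - c - b (k). *)

lemma small_if_square_subset:
  assumes "V \<times> V \<subseteq> E"
  shows "small E V"
  unfolding small_def
proof (intro ballI)
  fix x y assume "x \<in> V" "y \<in> V"
  then have "(x, y) \<in> E ^^ 1" using assms by auto
  then have "edist E x y \<le> enat 1"
    unfolding edist_def by (intro Inf_lower) blast
  then show "edist E x y \<le> 1" by (simp add: one_enat_def)
qed

lemma entourage_small_open_nbhd:
  assumes "entourage E"
  obtains V where "open V" "p \<in> V" "small E V"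
proof -
  obtain U where U: "open U" "Id \<subseteq> U" "U \<subseteq> E"
    using assms unfolding entourage_def by blast
  then have "(p, p) \<in> U" by blast
  then obtain X Y where XY: "open X" "open Y" "(p, p) \<in> X \<times> Y" "X \<times> Y \<subseteq> U"
    using open_prod_elim[OF U(1)] by metis
  have "(X \<inter> Y) \<times> (X \<inter> Y) \<subseteq> E" using XY(4) U(3) by blast
  then have "small E (X \<inter> Y)" by (rule small_if_square_subset)
  moreover have "open (X \<inter> Y)" "p \<in> X \<inter> Y" using XY by auto
  ultimately show ?thesis using that by blast
qed

lemma setdist_antimono:
  assumes "A' \<subseteq> A" "B' \<subseteq> B"
  shows "setdist E A B \<le> setdist E A' B'"
  unfolding setdist_def using assms by (intro Inf_superset_mono) blast

lemma shadow_subset: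
  assumes "small E V" "small F (- V)"
  shows "shadow E F \<subseteq> V"
  unfolding shadow_def using assms by (intro Inter_lower) simp

lemma unlinked_by_complement:
  assumes "small E V" "small F (- V)"
  shows "unlinked E F" and "unlinked F E"
  unfolding unlinked_def using assms by (blast intro: Compl_partition Compl_partition2)+

lemma accumulation_shadow_in_nbhd:
  assumes "entourage c" and "accumulation p B"
  obtains V b where "nbhd V p" "small c V" "b \<in> B"
    "unlinked c b" "unlinked b c" "shadow c b \<subseteq> V"
proof -
  obtain V where V: "open V" "p \<in> V" "small c V"
    using entourage_small_open_nbhd[OF assms(1)] by blast
  have "infinite {b \<in> B. small b (- V)}"
    using assms(2) V unfolding accumulation_def by blast
  then obtain b where b: "b \<in> B" "small b (- V)"
    using not_finite_existsD by blast
  have "nbhd V p" using V unfolding nbhd_def by blast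
  with V(3) b show ?thesis
    using that unlinked_by_complement shadow_subset by metis
qed

lemma betw_eep_to_eee:
  assumes "betw_eep A c p k" "nbhd V p" "small c V"
    and "unlinked c b" "shadow c b \<subseteq> V"
  shows "betw_eee A c b k"
proof -
  have "unlinked A c" using assms(1) unfolding betw_eep_def by blast
  have "enat k < setdist c (shadow c A) V"
    using assms(1-3) unfolding betw_eep_def by blast
  also have "\<dots> \<le> setdist c (shadow c A) (shadow c b)"
    using assms(5) by (intro setdist_antimono) auto
  finally show ?thesis
    using \<open>unlinked A c\<close> assms(4) unfolding betw_eee_def by blast
qed

lemma betw_pep_to_eep:
  assumes "betw_pep q c p k" "nbhd V p" "small c V"
    and "unlinked b c" "shadow c b \<subseteq> V"
  shows "betw_eep b c q k"
  unfolding betw_eep_def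
proof (intro conjI assms(4) allI impI)
  fix W assume "small c W \<and> nbhd W q"
  then have "enat k < setdist c V W"
    using assms(1-3) unfolding betw_pep_def by blast
  also have "\<dots> \<le> setdist c (shadow c b) W"
    using assms(5) by (intro setdist_antimono) auto
  finally show "enat k < setdist c (shadow c b) W" .
qed

theorem lemma3p1:
  fixes a :: "'a::t2_space + ('a \<times> 'a) set" and c :: "('a \<times> 'a) set"
    and p :: 'a and k :: nat and B :: "('a \<times> 'a) set set"
  assumes "compact (UNIV :: 'a set)"
    and "good_elem a" and "good_ent c"
    and "B \<subseteq> {E. good_ent E}"
    and "betw_xep a c p k"
    and "infinite B" and "accumulation p B"
  shows "\<exists>b\<in>B. betw_xee a c b k"
proof -
  have "entourage c" using assms(3) unfolding good_ent_def by blast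
  then obtain V b where V: "nbhd V p" "small c V" and "b \<in> B"
    and cb: "unlinked c b" "unlinked b c" and sh: "shadow c b \<subseteq> V"
    using accumulation_shadow_in_nbhd assms(7) by metis
  have "betw_xee a c b k"
  proof (cases a)
    case (Inl q)
    then show ?thesis
      using betw_pep_to_eep[OF _ V cb(2) sh] assms(5) by simp
  next
    case (Inr A)
    then show ?thesis
      using betw_eep_to_eee[OF _ V cb(1) sh] assms(5) by simp
  qed
  with \<open>b \<in> B\<close> show ?thesis by blast
qed

end
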